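(* Let $H$ be an equibipartite tree on $2l$ vertices. If $H$ does not contain a perfect matching, then there exists a partition of $V(H)$ into two classes of different sizes such that the larger class induces no edges and the smaller class induces exactly one edge.
   Context: A tree is equibipartite if its two bipartition classes have the same size. *)

theory Defs
  imports Main
begin

definition simple_graph :: "'a set \<Rightarrow> 'a set set \<Rightarrow> bool" where
  "simple_graph V E \<longleftrightarrow> finite V \<and> (\<forall>e\<in>E. e \<subseteq> V \<and> card e = 2)"

definition adj :: "'a set set \<Rightarrow> 'a \<Rightarrow> 'a \<Rightarrow> bool" where
  "adj E u v \<longleftrightarrow> {u, v} \<in> E"

definition connected_graph :: "'a set \<Rightarrow> 'a set set \<Rightarrow> bool" where
  "connected_graph V E \<longleftrightarrow> (\<forall>u\<in>V. \<forall>v\<in>V. (adj E)\<^sup>*\<^sup>* u v)"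

definition is_cycle :: "'a set set \<Rightarrow> 'a list \<Rightarrow> bool" where
  "is_cycle E cs \<longleftrightarrow> length cs \<ge> 3 \<and> distinct cs \<and>
     (\<forall>i. Suc i < length cs \<longrightarrow> adj E (cs ! i) (cs ! Suc i)) \<and>
     adj E (last cs) (hd cs)"

definition acyclic_graph :: "'a set set \<Rightarrow> bool" where
  "acyclic_graph E \<longleftrightarrow> \<not> (\<exists>cs. is_cycle E cs)"

definition is_tree :: "'a set \<Rightarrow> 'a set set \<Rightarrow> bool" where
  "is_tree V E \<longleftrightarrow> simple_graph V E \<and> connected_graph V E \<and> acyclic_graph E"

definition bipartition :: "'a set \<Rightarrow> 'a set set \<Rightarrow> 'a set \<Rightarrow> 'a set \<Rightarrow> bool" where
  "bipartition V E A B \<longleftrightarrow> A \<union> B = V \<and> A \<inter> B = {} \<and>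
     (\<forall>e\<in>E. card (e \<inter> A) = 1 \<and> card (e \<inter> B) = 1)"

text \<open>Equibipartite: the two bipartition classes have the same size (for a tree
  the bipartition is unique up to swapping the classes).\<close>
definition equibipartite :: "'a set \<Rightarrow> 'a set set \<Rightarrow> bool" where
  "equibipartite V E \<longleftrightarrow> (\<exists>A B. bipartition V E A B \<and> card A = card B)"

definition perfect_matching :: "'a set \<Rightarrow> 'a set set \<Rightarrow> 'a set set \<Rightarrow> bool" where
  "perfect_matching V E M \<longleftrightarrow> M \<subseteq> E \<and>
     (\<forall>e1\<in>M. \<forall>e2\<in>M. e1 \<noteq> e2 \<longrightarrow> e1 \<inter> e2 = {}) \<and> \<Union>M = V"

definition induced_edges :: "'a set set \<Rightarrow> 'a set \<Rightarrow> 'a set set" where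
  "induced_edges E S = {e \<in> E. e \<subseteq> S}"

end

theory Submission
  imports Defs
begin

text \<open>Fix the bipartition (A, B). Deleting an edge xy splits the tree into two branches; give
  the edge the flow "surplus of the class of x over the class of y in the branch of y". Since the
  whole tree is balanced, this does not depend on the orientation, and the flows at any vertex sum
  to 1. If all flows are nonnegative, every vertex therefore lies on exactly one edge of flow 1,
  and these edges form a perfect matching. Otherwise some edge uv with u in A has a branch Q on
  u's side with more B- than A-vertices; exchanging the two classes inside Q gives a larger class
  X without edges, and the only edge left inside its complement is uv.\<close>

lemma symp_adj: "symp (adj E)"
  by (simp add: symp_def adj_def insert_commute)

lemma rtranclp_imp_distinct_path:
  assumes "R\<^sup>*\<^sup>* u v"
  shows "\<exists>xs. xs \<noteq> [] \<and> hd xs = u \<and> last xs = v \<and> distinct xs \<and> successively R xs"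
  using assms
proof (induction rule: converse_rtranclp_induct)
  case base
  show ?case by (intro exI[of _ "[v]"]) simp
next
  case (step u w)
  then obtain xs where xs: "xs \<noteq> []" "hd xs = w" "last xs = v" "distinct xs" "successively R xs"
    by blast
  show ?case
  proof (cases "u \<in> set xs")
    case True
    then obtain ys zs where "xs = ys @ u # zs" by (meson split_list)
    then show ?thesis using xs
      by (intro exI[of _ "u # zs"]) (auto simp: successively_append_iff)
  next
    case False
    then show ?thesis using xs step(1)
      by (intro exI[of _ "u # xs"]) (auto simp: successively_Cons)
  qed
qed

lemma acyclic_edge_is_bridge:
  assumes "acyclic_graph E" "{u, v} \<in> E" "u \<noteq> v"
  shows "\<not> (adj (E - {{u, v}}))\<^sup>*\<^sup>* u v"
proof
  assume "(adj (E - {{u, v}}))\<^sup>*\<^sup>* u v"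
  then obtain xs where xs: "xs \<noteq> []" "hd xs = u" "last xs = v" "distinct xs"
    and path: "successively (adj (E - {{u, v}})) xs"
    by (blast dest: rtranclp_imp_distinct_path)
  have "length xs \<ge> 3"
    using xs path assms(3)
    by (cases xs; cases "tl xs"; cases "tl (tl xs)") (auto simp: adj_def)
  moreover have "successively (adj E) xs"
    using path by (rule successively_mono) (simp add: adj_def)
  moreover have "adj E (last xs) (hd xs)"
    using xs assms(2) by (simp add: adj_def insert_commute)
  ultimately have "is_cycle E xs"
    using xs(4) by (simp add: is_cycle_def successively_conv_nth)
  then show False using assms(1) by (auto simp: acyclic_graph_def)
qed

locale tree =
  fixes V :: "'a set" and E :: "'a set set"
  assumes is_tree: "is_tree V E"
begin

lemma finite_V: "finite V"
  using is_tree by (simp add: is_tree_def simple_graph_def)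

lemma edge_endpoints: "{x, y} \<in> E \<Longrightarrow> x \<noteq> y \<and> x \<in> V \<and> y \<in> V"
  using is_tree by (cases "x = y") (auto simp: is_tree_def simple_graph_def)

lemma connected: "x \<in> V \<Longrightarrow> y \<in> V \<Longrightarrow> (adj E)\<^sup>*\<^sup>* x y"
  using is_tree by (simp add: is_tree_def connected_graph_def)

definition branch :: "'a \<Rightarrow> 'a \<Rightarrow> 'a set" where
  "branch u v = {x \<in> V. (adj (E - {{u, v}}))\<^sup>*\<^sup>* u x}"

lemma branch_subset: "branch u v \<subseteq> V"
  by (auto simp: branch_def)

lemma finite_branch: "finite (branch u v)"
  using finite_subset[OF branch_subset finite_V] .

lemma self_in_branch: "{u, v} \<in> E \<Longrightarrow> u \<in> branch u v"
  using edge_endpoints[of u v] by (simp add: branch_def)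

lemma branch_closed:
  assumes "{u, v} \<in> E" "x \<in> branch u v" "{x, y} \<in> E" "{x, y} \<noteq> {u, v}"
  shows "y \<in> branch u v"
proof -
  have "adj (E - {{u, v}}) x y" using assms(3,4) by (simp add: adj_def)
  then show ?thesis
    using assms(2) edge_endpoints[OF assms(3)]
    by (auto simp: branch_def intro: rtranclp.rtrancl_into_rtrancl)
qed

lemma branch_Un:
  assumes uv: "{u, v} \<in> E"
  shows "branch u v \<union> branch v u = V"
proof -
  have "x \<in> branch u v \<or> x \<in> branch v u" if "x \<in> V" for x
  proof -
    have "(adj E)\<^sup>*\<^sup>* u x"
      using connected edge_endpoints[OF uv] that by blast
    then show ?thesis
    proof (induction rule: rtranclp_induct)
      case base
      show ?case using self_in_branch[OF uv] by simp
    next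
      case (step y z)
      have yz: "{y, z} \<in> E" using step.hyps(2) by (simp add: adj_def)
      show ?case
      proof (cases "{y, z} = {u, v}")
        case True
        then show ?thesis
          using self_in_branch[OF uv] self_in_branch[of v u] uv
          by (auto simp: doubleton_eq_iff insert_commute)
      next
        case False
        then show ?thesis
          using step.IH branch_closed[OF uv _ yz] branch_closed[of v u y z] uv yz
          by (auto simp: insert_commute)
      qed
    qed
  qed
  then show ?thesis using branch_subset by blast
qed

lemma branch_Int:
  assumes uv: "{u, v} \<in> E"
  shows "branch u v \<inter> branch v u = {}"
proof (rule ccontr)
  assume "branch u v \<inter> branch v u \<noteq> {}"
  then obtain x where "(adj (E - {{u, v}}))\<^sup>*\<^sup>* u x" "(adj (E - {{u, v}}))\<^sup>*\<^sup>* v x"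
    by (auto simp: branch_def insert_commute)
  then have "(adj (E - {{u, v}}))\<^sup>*\<^sup>* u v"
    by (meson rtranclp_trans sympD[OF symp_rtranclp[OF symp_adj]])
  then show False
    using acyclic_edge_is_bridge[of E u v] uv edge_endpoints[OF uv] is_tree
    by (simp add: is_tree_def)
qed

lemma edge_across_branches:
  assumes "{u, v} \<in> E" "{x, y} \<in> E" "x \<in> branch u v" "y \<in> branch v u"
  shows "{x, y} = {u, v}"
  using branch_closed[OF assms(1,3,2)] branch_Int[OF assms(1)] assms(4) by blast

definition neighbours :: "'a \<Rightarrow> 'a set" where
  "neighbours x = {y. {x, y} \<in> E}"

lemma finite_neighbours: "finite (neighbours x)"
  using finite_subset[OF _ finite_V, of "neighbours x"] edge_endpoints
  by (auto simp: neighbours_def)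

lemma vertices_eq_UN_branches:
  assumes "x \<in> V"
  shows "V - {x} = (\<Union>y\<in>neighbours x. branch y x)"
proof
  show "V - {x} \<subseteq> (\<Union>y\<in>neighbours x. branch y x)"
  proof
    fix z assume z: "z \<in> V - {x}"
    have "(adj E)\<^sup>*\<^sup>* x z" using connected assms z by blast
    then have "z = x \<or> (\<exists>y\<in>neighbours x. z \<in> branch y x)"
    proof (induction rule: rtranclp_induct)
      case base
      then show ?case by simp
    next
      case (step p q)
      have pq: "{p, q} \<in> E" using step.hyps(2) by (simp add: adj_def)
      from step.IH show ?case
      proof
        assume "p = x"
        then show ?thesis
          using pq self_in_branch[of q x] by (auto simp: neighbours_def insert_commute)
      next
        assume "\<exists>y\<in>neighbours x. p \<in> branch y x"
        then obtain y where y: "{y, x} \<in> E" "y \<in> neighbours x" "p \<in> branch y x"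
          by (auto simp: neighbours_def insert_commute)
        show ?thesis
        proof (cases "{p, q} = {y, x}")
          case True
          then show ?thesis
            using y self_in_branch[OF y(1)] by (auto simp: doubleton_eq_iff)
        next
          case False
          then show ?thesis using branch_closed[OF y(1,3) pq] y(2) by blast
        qed
      qed
    qed
    then show "z \<in> (\<Union>y\<in>neighbours x. branch y x)" using z by blast
  qed
next
  show "(\<Union>y\<in>neighbours x. branch y x) \<subseteq> V - {x}"
    using branch_subset branch_Int self_in_branch
    by (fastforce simp: neighbours_def insert_commute)
qed

lemma branch_subset_opposite_branch:
  assumes xy: "{x, y} \<in> E" and xz: "{x, z} \<in> E" and "y \<noteq> z"
  shows "branch y x \<subseteq> branch x z"
proof
  fix w assume "w \<in> branch y x"
  then have "(adj (E - {{y, x}}))\<^sup>*\<^sup>* y w" by (simp add: branch_def)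
  then show "w \<in> branch x z"
  proof (induction rule: rtranclp_induct)
    case base
    show ?case
      using branch_closed[OF xz self_in_branch[OF xz] xy] assms by (auto simp: doubleton_eq_iff)
  next
    case (step p q)
    have pq: "{p, q} \<in> E" "{p, q} \<noteq> {y, x}" using step.hyps(2) by (auto simp: adj_def)
    have "p \<in> branch y x" "q \<in> branch y x"
      using step.hyps edge_endpoints[OF pq(1)] by (auto simp: branch_def
          intro: rtranclp.rtrancl_into_rtrancl)
    moreover have "x \<notin> branch y x"
      using branch_Int[OF xy] self_in_branch[OF xy] by blast
    ultimately have "{p, q} \<noteq> {x, z}" by (auto simp: doubleton_eq_iff)
    then show ?case using branch_closed[OF xz step.IH pq(1)] by blast
  qed
qed

lemma branches_disjoint:
  assumes "y \<in> neighbours x" "z \<in> neighbours x" "y \<noteq> z"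
  shows "branch y x \<inter> branch z x = {}"
proof -
  have xy: "{x, y} \<in> E" and xz: "{x, z} \<in> E" using assms by (auto simp: neighbours_def)
  have "branch z x = V - branch x z"
    using branch_Un[OF xz] branch_Int[OF xz] by blast
  then show ?thesis using branch_subset_opposite_branch[OF xy xz assms(3)] by blast
qed

end

lemma sum_nonneg_int_eq_1_imp_ex1:
  fixes f :: "'b \<Rightarrow> int"
  assumes "finite S" "\<And>y. y \<in> S \<Longrightarrow> f y \<ge> 0" "sum f S = 1"
  shows "\<exists>!y. y \<in> S \<and> f y = 1"
proof -
  have le_1: "f y \<le> 1" if "y \<in> S" for y
    using member_le_sum[of y S f] that assms by simp
  have "\<exists>y\<in>S. f y \<noteq> 0"
    using assms(3) by (metis sum.neutral zero_neq_one)
  then obtain y where y: "y \<in> S" "f y = 1"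
    using le_1 assms(2) by force
  moreover have "z = y" if "z \<in> S" "f z = 1" for z
  proof (rule ccontr)
    assume "z \<noteq> y"
    then have "sum f {y, z} = 2" using y that by simp
    moreover have "sum f {y, z} \<le> sum f S"
      using assms y that by (intro sum_mono2) auto
    ultimately show False using assms(3) by simp
  qed
  ultimately show ?thesis by blast
qed

locale equibipartite_tree = tree +
  fixes A B :: "'a set"
  assumes bipartition: "bipartition V E A B" and card_A_eq_card_B: "card A = card B"
begin

lemma A_Un_B: "A \<union> B = V" and A_Int_B: "A \<inter> B = {}"
  using bipartition by (auto simp: bipartition_def)

lemma edge_crosses: "{x, y} \<in> E \<Longrightarrow> x \<in> A \<longleftrightarrow> y \<notin> A"
  using bipartition edge_endpoints[of x y]
  by (cases "x \<in> A"; cases "y \<in> A") (auto simp: bipartition_def)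

lemma edge_between_classes:
  assumes "e \<in> E"
  obtains p q where "e = {p, q}" "p \<in> A" "q \<in> B" "q \<notin> A"
proof -
  obtain x y where e: "e = {x, y}"
    using is_tree assms by (auto simp: is_tree_def simple_graph_def card_2_iff)
  then have "x \<in> A \<longleftrightarrow> y \<notin> A" "x \<in> V" "y \<in> V"
    using edge_crosses edge_endpoints assms by blast+
  then show thesis
    using that e A_Un_B by (cases "x \<in> A") (auto simp: insert_commute)
qed

definition sign :: "'a \<Rightarrow> int" where
  "sign x = (if x \<in> A then 1 else -1)"

definition imbalance :: "'a set \<Rightarrow> int" where
  "imbalance S = (\<Sum>x\<in>S. sign x)"

lemma imbalance_eq_card_diff:
  assumes "S \<subseteq> V"
  shows "imbalance S = int (card (A \<inter> S)) - int (card (B \<inter> S))"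
proof -
  have fin: "finite (A \<inter> S)" "finite (B \<inter> S)"
    using assms finite_V finite_subset by blast+
  have disj: "(A \<inter> S) \<inter> (B \<inter> S) = {}" using A_Int_B by blast
  have "S = (A \<inter> S) \<union> (B \<inter> S)" using assms A_Un_B by blast
  then have "imbalance S = (\<Sum>x\<in>A \<inter> S. sign x) + (\<Sum>x\<in>B \<inter> S. sign x)"
    unfolding imbalance_def using sum.union_disjoint[OF fin disj] by metis
  also have "(\<Sum>x\<in>B \<inter> S. sign x) = (\<Sum>x\<in>B \<inter> S. -1)"
    using A_Int_B by (intro sum.cong) (auto simp: sign_def)
  finally show ?thesis by (simp add: sign_def)
qed

lemma imbalance_V: "imbalance V = 0"
proof -
  have "A \<inter> V = A" "B \<inter> V = B" using A_Un_B by blast+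
  then show ?thesis using imbalance_eq_card_diff[of V] card_A_eq_card_B by simp
qed

lemma imbalance_branch_swap:
  assumes "{u, v} \<in> E"
  shows "imbalance (branch v u) = - imbalance (branch u v)"
  using sum.union_disjoint[OF finite_branch finite_branch branch_Int[OF assms], of sign]
  by (simp add: imbalance_def[symmetric] branch_Un[OF assms] imbalance_V)

lemma sum_imbalance_branches:
  assumes "x \<in> V"
  shows "(\<Sum>y\<in>neighbours x. imbalance (branch y x)) = - sign x"
proof -
  have "(\<Sum>y\<in>neighbours x. imbalance (branch y x)) = imbalance (V - {x})"
    unfolding imbalance_def vertices_eq_UN_branches[OF assms]
    using finite_neighbours finite_branch branches_disjoint
    by (intro sum.UNION_disjoint[symmetric]) auto
  also have "\<dots> = - sign x"
    using sum_diff1[OF finite_V, of sign x] assms imbalance_V by (simp add: imbalance_def)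
  finally show ?thesis .
qed

definition flow :: "'a \<Rightarrow> 'a \<Rightarrow> int" where
  "flow x y = - sign x * imbalance (branch y x)"

lemma flow_commute:
  assumes "{x, y} \<in> E"
  shows "flow x y = flow y x"
proof -
  have "sign y = - sign x" using edge_crosses[OF assms] by (simp add: sign_def)
  then show ?thesis
    using imbalance_branch_swap[OF assms] by (simp add: flow_def)
qed

lemma sum_flow:
  assumes "x \<in> V"
  shows "(\<Sum>y\<in>neighbours x. flow x y) = 1"
proof -
  have "(\<Sum>y\<in>neighbours x. flow x y) = - sign x * (\<Sum>y\<in>neighbours x. imbalance (branch y x))"
    by (simp add: flow_def sum_distrib_left)
  also have "\<dots> = 1"
    using sum_imbalance_branches[OF assms] by (simp add: sign_def)
  finally show ?thesis .
qed

lemma perfect_matching_if_flow_nonneg: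
  assumes nonneg: "\<And>x y. {x, y} \<in> E \<Longrightarrow> flow x y \<ge> 0"
  shows "perfect_matching V E {{x, y} | x y. {x, y} \<in> E \<and> flow x y = 1}"
    (is "perfect_matching V E ?M")
proof -
  have unique: "\<exists>!y. y \<in> neighbours x \<and> flow x y = 1" if "x \<in> V" for x
    by (rule sum_nonneg_int_eq_1_imp_ex1[OF finite_neighbours _ sum_flow[OF that]])
      (simp add: neighbours_def nonneg)
  have edge_at: "\<exists>y. e = {x, y} \<and> y \<in> neighbours x \<and> flow x y = 1"
    if "e \<in> ?M" "x \<in> e" for e x
  proof -
    obtain a b where ab: "e = {a, b}" "{a, b} \<in> E" "flow a b = 1" using \<open>e \<in> ?M\<close> by blast
    then have "{b, a} \<in> E" "flow b a = 1" using flow_commute[OF ab(2)] by (simp_all add: insert_commute)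
    then show ?thesis using ab \<open>x \<in> e\<close> by (auto simp: neighbours_def insert_commute)
  qed
  show ?thesis
    unfolding perfect_matching_def
  proof (intro conjI ballI impI)
    show "?M \<subseteq> E" by blast
  next
    fix e1 e2 assume e: "e1 \<in> ?M" "e2 \<in> ?M" "e1 \<noteq> e2"
    show "e1 \<inter> e2 = {}"
    proof (rule ccontr)
      assume "e1 \<inter> e2 \<noteq> {}"
      then obtain x where x: "x \<in> e1" "x \<in> e2" by blast
      obtain y1 where y1: "e1 = {x, y1}" "y1 \<in> neighbours x" "flow x y1 = 1"
        using edge_at e(1) x(1) by blast
      obtain y2 where y2: "e2 = {x, y2}" "y2 \<in> neighbours x" "flow x y2 = 1"
        using edge_at e(2) x(2) by blast
      have "x \<in> V" using y1(2) edge_endpoints by (auto simp: neighbours_def)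
      then have "y1 = y2" using unique y1 y2 by blast
      then show False using y1 y2 e(3) by simp
    qed
  next
    show "\<Union>?M = V"
    proof (intro equalityI subsetI)
      fix x assume "x \<in> \<Union>?M"
      then obtain e where "e \<in> ?M" "x \<in> e" by blast
      then obtain y where "y \<in> neighbours x" using edge_at by blast
      then show "x \<in> V" using edge_endpoints by (auto simp: neighbours_def)
    next
      fix x assume "x \<in> V"
      then obtain y where "y \<in> neighbours x" "flow x y = 1" using unique by blast
      then have "{x, y} \<in> ?M" by (auto simp: neighbours_def)
      then show "x \<in> \<Union>?M" by blast
    qed
  qed
qed

definition switch :: "'a set \<Rightarrow> 'a set" where
  "switch S = (A - S) \<union> (B \<inter> S)"

lemma card_switch:
  assumes "S \<subseteq> V"
  shows "int (card (switch S)) - int (card (V - switch S)) = - 2 * imbalance S"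
proof -
  have fin: "finite A" "finite B" using A_Un_B finite_V by (auto intro: finite_subset)
  have "V - switch S = (B - S) \<union> (A \<inter> S)"
    using A_Un_B A_Int_B assms by (auto simp: switch_def)
  then have "card (V - switch S) = card (B - S) + card (A \<inter> S)"
    using fin A_Int_B by (simp add: card_Un_disjoint disjoint_iff)
  moreover have "card (switch S) = card (A - S) + card (B \<inter> S)"
    using fin A_Int_B by (simp add: switch_def card_Un_disjoint disjoint_iff)
  moreover have "card A = card (A \<inter> S) + card (A - S)" "card B = card (B \<inter> S) + card (B - S)"
    using fin by (simp_all add: card_Int_Diff)
  ultimately show ?thesis
    using imbalance_eq_card_diff[OF assms] card_A_eq_card_B by linarith
qed

lemma switch_branch_independent:
  assumes uv: "{u, v} \<in> E" and "u \<in> A"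
  shows "induced_edges E (switch (branch u v)) = {}"
proof -
  have "\<not> e \<subseteq> switch (branch u v)" if "e \<in> E" for e
  proof
    assume sub: "e \<subseteq> switch (branch u v)"
    obtain p q where pq: "e = {p, q}" "p \<in> A" "q \<in> B" "q \<notin> A"
      using edge_between_classes[OF \<open>e \<in> E\<close>] .
    have "p \<in> branch v u" "q \<in> branch u v"
      using sub pq branch_Un[OF uv] edge_endpoints[of p q] \<open>e \<in> E\<close> A_Int_B
      by (auto simp: switch_def)
    moreover have "{q, p} \<in> E" using \<open>e \<in> E\<close> pq(1) by (simp add: insert_commute)
    ultimately have "{q, p} = {u, v}"
      using edge_across_branches[OF uv] by blast
    then show False
      using \<open>p \<in> branch v u\<close> branch_Int[OF uv] self_in_branch[OF uv] pq(2,4) \<open>u \<in> A\<close>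
      by (auto simp: doubleton_eq_iff)
  qed
  then show ?thesis by (auto simp: induced_edges_def)
qed

lemma switch_branch_complement_one_edge:
  assumes uv: "{u, v} \<in> E" and "u \<in> A"
  shows "induced_edges E (V - switch (branch u v)) = {{u, v}}"
proof -
  have "e = {u, v}" if "e \<in> E" "e \<subseteq> V - switch (branch u v)" for e
  proof -
    obtain p q where pq: "e = {p, q}" "p \<in> A" "q \<in> B" "q \<notin> A"
      using edge_between_classes[OF \<open>e \<in> E\<close>] .
    have "p \<in> branch u v" "q \<notin> branch u v" "q \<in> V"
      using that pq by (auto simp: switch_def)
    then have "p \<in> branch u v" "q \<in> branch v u"
      using branch_Un[OF uv] by blast+
    then show ?thesis using edge_across_branches[OF uv] that(1) pq(1) by simp
  qed
  moreover have "{u, v} \<subseteq> V - switch (branch u v)"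
  proof -
    have "u \<in> branch u v" "v \<notin> branch u v" "u \<notin> B" "v \<notin> A"
      using self_in_branch[OF uv] self_in_branch[of v u] branch_Int[OF uv] uv A_Int_B assms(2)
        edge_crosses[OF uv] by (auto simp: insert_commute)
    then show ?thesis using edge_endpoints[OF uv] by (auto simp: switch_def)
  qed
  ultimately show ?thesis using uv unfolding induced_edges_def by blast
qed

lemma partition_if_negative_flow:
  assumes "{x, y} \<in> E" "flow x y < 0"
  shows "\<exists>X Y. X \<union> Y = V \<and> X \<inter> Y = {} \<and> card X > card Y \<and>
           induced_edges E X = {} \<and> card (induced_edges E Y) = 1"
proof -
  obtain u v where uv: "{u, v} \<in> E" "u \<in> A" "flow u v < 0"
  proof (cases "x \<in> A")
    case True
    then show thesis using that assms by blast
  next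
    case False
    then show thesis
      using that[of y x] assms edge_crosses[OF assms(1)] flow_commute[OF assms(1)]
      by (simp add: insert_commute)
  qed
  have "imbalance (branch u v) < 0"
    using uv imbalance_branch_swap[OF uv(1)] by (simp add: flow_def sign_def)
  then have "card (switch (branch u v)) > card (V - switch (branch u v))"
    using card_switch[OF branch_subset, of u v] by linarith
  moreover have "switch (branch u v) \<subseteq> V"
    using A_Un_B by (auto simp: switch_def)
  ultimately show ?thesis
    using switch_branch_independent[OF uv(1,2)] switch_branch_complement_one_edge[OF uv(1,2)]
    by (intro exI[of _ "switch (branch u v)"] exI[of _ "V - switch (branch u v)"]) (simp add: Un_absorb1)
qed

end

theorem mainTheorem7:
  fixes V :: "'a set" and E :: "'a set set" and l :: nat
  assumes "is_tree V E"
    and "equibipartite V E"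
    and "card V = 2 * l"
    and "\<not> (\<exists>M. perfect_matching V E M)"
  shows "\<exists>X Y. X \<union> Y = V \<and> X \<inter> Y = {} \<and> card X > card Y \<and>
           induced_edges E X = {} \<and> card (induced_edges E Y) = 1"
proof -
  \<comment> \<open>The hypothesis on card V is implied by equibipartiteness and not needed.\<close>
  obtain A B where "bipartition V E A B" "card A = card B"
    using assms(2) by (auto simp: equibipartite_def)
  then interpret equibipartite_tree V E A B
    using assms(1) by unfold_locales
  show ?thesis
  proof (cases "\<exists>x y. {x, y} \<in> E \<and> flow x y < 0")
    case True
    then show ?thesis using partition_if_negative_flow by blast
  next
    case False
    then have "perfect_matching V E {{x, y} | x y. {x, y} \<in> E \<and> flow x y = 1}"
      by (intro perfect_matching_if_flow_nonneg) force
    then show ?thesis using assms(4) by blast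
  qed
qed

end
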